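(* Let $G$ be a graph containing no cycle of length 6, let $x\in V(G)$, and let $A$ be a connected component of $G[N_2(x)]$ which contains an odd cycle. Then $|N(x)\cap N(V(A))|=1$.
   Context: All graphs are finite, simple and undirected; "containing no cycle of length 6" means having no subgraph (not necessarily induced) isomorphic to $C_6$. $N_i(S)$ denotes the set of vertices at distance exactly $i$ from the vertex set $S$, $N(S)=N_1(S)$, $N(v)=N(\{v\})$, $N_2(v)=N_2(\{v\})$. *)

theory Defs
  imports Main
begin

definition graph :: "'a set \<Rightarrow> ('a \<Rightarrow> 'a \<Rightarrow> bool) \<Rightarrow> bool" where
  "graph V E \<longleftrightarrow> finite V \<and> (\<forall>x y. E x y \<longrightarrow> x \<in> V \<and> y \<in> V)
     \<and> (\<forall>x y. E x y \<longrightarrow> E y x) \<and> (\<forall>x. \<not> E x x)"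

definition walk :: "('a \<Rightarrow> 'a \<Rightarrow> bool) \<Rightarrow> 'a list \<Rightarrow> bool" where
  "walk E xs \<longleftrightarrow> xs \<noteq> [] \<and> (\<forall>i. Suc i < length xs \<longrightarrow> E (xs ! i) (xs ! Suc i))"

definition is_cycle :: "'a set \<Rightarrow> ('a \<Rightarrow> 'a \<Rightarrow> bool) \<Rightarrow> 'a list \<Rightarrow> bool" where
  "is_cycle V E xs \<longleftrightarrow> length xs \<ge> 3 \<and> distinct xs \<and> set xs \<subseteq> V
     \<and> (\<forall>i < length xs. E (xs ! i) (xs ! ((Suc i) mod length xs)))"

definition has_cycle_of_length :: "'a set \<Rightarrow> ('a \<Rightarrow> 'a \<Rightarrow> bool) \<Rightarrow> nat \<Rightarrow> bool" where
  "has_cycle_of_length V E k \<longleftrightarrow> (\<exists>xs. is_cycle V E xs \<and> length xs = k)"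

definition reach_within :: "'a set \<Rightarrow> ('a \<Rightarrow> 'a \<Rightarrow> bool) \<Rightarrow> nat \<Rightarrow> 'a set \<Rightarrow> 'a \<Rightarrow> bool" where
  "reach_within V E i S v \<longleftrightarrow> (\<exists>xs. walk E xs \<and> set xs \<subseteq> V \<and> hd xs \<in> S \<and> last xs = v
      \<and> length xs \<le> Suc i)"

text \<open>N_i(S): vertices at distance exactly i from S.\<close>
definition nbhd_i :: "'a set \<Rightarrow> ('a \<Rightarrow> 'a \<Rightarrow> bool) \<Rightarrow> nat \<Rightarrow> 'a set \<Rightarrow> 'a set" where
  "nbhd_i V E i S = {v \<in> V. reach_within V E i S v \<and> (i = 0 \<or> \<not> reach_within V E (i - 1) S v)}"

definition induced :: "('a \<Rightarrow> 'a \<Rightarrow> bool) \<Rightarrow> 'a set \<Rightarrow> 'a \<Rightarrow> 'a \<Rightarrow> bool" where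
  "induced E W x y \<longleftrightarrow> E x y \<and> x \<in> W \<and> y \<in> W"

definition is_component :: "'a set \<Rightarrow> ('a \<Rightarrow> 'a \<Rightarrow> bool) \<Rightarrow> 'a set \<Rightarrow> bool" where
  "is_component W F A \<longleftrightarrow> (\<exists>a \<in> W. A = {v. \<exists>xs. walk F xs \<and> set xs \<subseteq> W \<and> hd xs = a \<and> last xs = v})"

end

theory Submission
  imports Defs
begin

text \<open>
  Write \<open>N\<^sub>2\<close> for the vertices at distance 2 from \<open>x\<close>. If \<open>a \<noteq> b\<close> in \<open>N\<^sub>2\<close> have a common
  neighbour \<open>p \<in> N\<^sub>2\<close>, then any common neighbour \<open>u\<close> of \<open>x\<close> and \<open>a\<close> equals any common
  neighbour \<open>w\<close> of \<open>x\<close> and \<open>b\<close>, since otherwise \<open>x u a p b w\<close> is a 6-cycle. Hence \<open>a\<close> and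
  \<open>b\<close> have the same unique common neighbour with \<open>x\<close>. Stepping by two around an odd cycle
  of \<open>G[N\<^sub>2]\<close> visits all of its vertices, so they all share one such neighbour \<open>u\<close>; along
  edges this spreads to the whole component \<open>A\<close>, and then \<open>u\<close> is the only vertex of
  \<open>N(x)\<close> adjacent to \<open>A\<close>.
\<close>

lemma walk_singleton [simp]: "walk E [a]"
  by (simp add: walk_def)

lemma walk_Cons_Cons [simp]: "walk E (a # b # xs) \<longleftrightarrow> E a b \<and> walk E (b # xs)"
  unfolding walk_def by (auto simp: nth_Cons split: nat.splits)

lemma walk_snoc: "ys \<noteq> [] \<Longrightarrow> walk E (ys @ [v]) \<longleftrightarrow> walk E ys \<and> E (last ys) v"
  by (induction ys rule: induct_list012) simp_all

lemma walk_nonempty: "walk E xs \<Longrightarrow> xs \<noteq> []"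
  by (simp add: walk_def)

lemma graph_edge_in_V: "graph V E \<Longrightarrow> E u v \<Longrightarrow> u \<in> V \<and> v \<in> V"
  by (simp add: graph_def)

lemma reach_within_0: "reach_within V E 0 S v \<longleftrightarrow> v \<in> S \<and> v \<in> V"
proof
  assume "reach_within V E 0 S v"
  then obtain xs where "walk E xs" "set xs \<subseteq> V" "hd xs \<in> S" "last xs = v" "length xs \<le> 1"
    unfolding reach_within_def by auto
  then show "v \<in> S \<and> v \<in> V"
    using walk_nonempty by (cases xs) auto
qed (auto simp: reach_within_def intro!: exI[of _ "[v]"])

lemma reach_within_Suc:
  assumes "graph V E"
  shows "reach_within V E (Suc i) S v \<longleftrightarrow>
           reach_within V E i S v \<or> (\<exists>u. reach_within V E i S u \<and> E u v)"
proof
  assume "reach_within V E (Suc i) S v"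
  then obtain xs where xs: "walk E xs" "set xs \<subseteq> V" "hd xs \<in> S" "last xs = v"
    and len: "length xs \<le> Suc (Suc i)"
    unfolding reach_within_def by auto
  show "reach_within V E i S v \<or> (\<exists>u. reach_within V E i S u \<and> E u v)"
  proof (cases "length xs \<le> Suc i")
    case True
    then show ?thesis using xs unfolding reach_within_def by blast
  next
    case False
    define ys where "ys = butlast xs"
    have ys: "ys \<noteq> []" "xs = ys @ [v]"
      using False xs(4) walk_nonempty[OF xs(1)]
      by (auto simp: ys_def simp flip: length_0_conv)
    then have "walk E ys" "E (last ys) v" "hd ys = hd xs"
      using xs(1) by (auto simp: walk_snoc)
    then have "reach_within V E i S (last ys)"
      unfolding reach_within_def using xs(2,3) ys len
      by (intro exI[of _ ys]) auto
    then show ?thesis using \<open>E (last ys) v\<close> by blast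
  qed
next
  assume "reach_within V E i S v \<or> (\<exists>u. reach_within V E i S u \<and> E u v)"
  then show "reach_within V E (Suc i) S v"
  proof
    assume "reach_within V E i S v"
    then show ?thesis unfolding reach_within_def by force
  next
    assume "\<exists>u. reach_within V E i S u \<and> E u v"
    then obtain u ys where "E u v" "walk E ys" "set ys \<subseteq> V" "hd ys \<in> S" "last ys = u"
      "length ys \<le> Suc i"
      unfolding reach_within_def by auto
    then show ?thesis
      unfolding reach_within_def using assms walk_nonempty[of E ys]
      by (intro exI[of _ "ys @ [v]"]) (auto simp: walk_snoc graph_def)
  qed
qed

lemma nbhd_i_1:
  assumes "graph V E"
  shows "nbhd_i V E 1 S = {v. v \<notin> S \<and> (\<exists>u\<in>S. E u v)}"
  using assms unfolding nbhd_i_def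
  by (auto simp: reach_within_Suc[OF assms] reach_within_0 graph_def)

lemma nbhd_i_2_singleton:
  assumes "graph V E" and "x \<in> V"
  shows "nbhd_i V E 2 {x} = {v. v \<noteq> x \<and> \<not> E x v \<and> (\<exists>u. E x u \<and> E u v)}"
  using assms unfolding nbhd_i_def numeral_2_eq_2
  by (auto simp: reach_within_Suc[OF assms(1)] reach_within_0 graph_def)

lemma graph_sym: "graph V E \<Longrightarrow> E u v \<Longrightarrow> E v u"
  and graph_irrefl: "graph V E \<Longrightarrow> \<not> E v v"
  by (simp_all add: graph_def)

lemma induced_sym: "graph V E \<Longrightarrow> induced E W u v \<Longrightarrow> induced E W v u"
  unfolding induced_def graph_def by blast

lemma has_cycle_of_length_6I:
  assumes "graph V E" and "distinct [a, b, c, d, e, f]"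
    and "E a b" "E b c" "E c d" "E d e" "E e f" "E f a"
  shows "has_cycle_of_length V E 6"
proof -
  let ?cyc = "[a, b, c, d, e, f]"
  have "E (?cyc ! i) (?cyc ! (Suc i mod 6))" if "i < 6" for i
  proof -
    have "i = 0 \<or> i = 1 \<or> i = 2 \<or> i = 3 \<or> i = 4 \<or> i = 5"
      using that by linarith
    then show ?thesis
      using assms(3-) by auto
  qed
  moreover have "set ?cyc \<subseteq> V"
    using assms(3-) graph_edge_in_V[OF assms(1)] by auto
  ultimately show ?thesis
    using assms(2) unfolding has_cycle_of_length_def is_cycle_def
    by (intro exI[of _ ?cyc]) simp
qed

lemma walk_preserves_closed_set:
  assumes "walk F xs" and "\<And>z t. F z t \<Longrightarrow> z \<in> S \<longleftrightarrow> t \<in> S"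
  shows "hd xs \<in> S \<longleftrightarrow> last xs \<in> S"
  using assms(1)
proof (induction xs rule: induct_list012)
  case (3 a b zs)
  then show ?case
    using assms(2)[of a b] by simp
qed (simp_all add: walk_def)

lemma component_subset:
  assumes "is_component W F A"
  shows "A \<subseteq> W"
  using assms walk_nonempty unfolding is_component_def by fastforce

lemma component_subset_if_closed:
  assumes "is_component W F A" and "\<And>z t. F z t \<Longrightarrow> z \<in> S \<longleftrightarrow> t \<in> S"
    and "a \<in> A" and "a \<in> S"
  shows "A \<subseteq> S"
proof -
  obtain a0 where A: "A = {v. \<exists>xs. walk F xs \<and> set xs \<subseteq> W \<and> hd xs = a0 \<and> last xs = v}"
    using assms(1) unfolding is_component_def by blast
  have same: "a0 \<in> S \<longleftrightarrow> v \<in> S" if v: "v \<in> A" for v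
  proof -
    obtain xs where "walk F xs" "hd xs = a0" "last xs = v"
      using v unfolding A by blast
    then show ?thesis
      using walk_preserves_closed_set[OF _ assms(2)] by blast
  qed
  then show ?thesis
    using assms(3,4) by blast
qed

lemma odd_periodic_two_step_const:
  fixes g :: "nat \<Rightarrow> 'b"
  assumes "odd k" and period: "\<And>i. g (i + k) = g i" and step: "\<And>i. g (Suc (Suc i)) = g i"
  shows "g i = g 0"
proof -
  have even: "g (2 * n) = g 0" for n
    by (induction n) (simp_all add: step)
  have periodic: "g (i + k * n) = g i" for n
  proof (induction n)
    case (Suc n)
    have "g (i + k * Suc n) = g ((i + k * n) + k)"
      by (simp add: algebra_simps)
    also have "\<dots> = g i"
      using Suc.IH period by simp
    finally show ?case .
  qed simp
  have "even (i + k * i)"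
    using \<open>odd k\<close> by simp
  then obtain n where n: "i + k * i = 2 * n"
    by (rule evenE)
  have "g i = g (i + k * i)"
    by (rule periodic[symmetric])
  also have "\<dots> = g 0"
    unfolding n by (rule even)
  finally show ?thesis .
qed

locale c6_free_graph =
  fixes V :: "'a set" and E :: "'a \<Rightarrow> 'a \<Rightarrow> bool"
  assumes graph: "graph V E" and no_C6: "\<not> has_cycle_of_length V E 6"
begin

definition common_nbrs :: "'a \<Rightarrow> 'a \<Rightarrow> 'a set" where
  "common_nbrs x v = {u. E x u \<and> E u v}"

lemma mem_nbhd_2_iff:
  "x \<in> V \<Longrightarrow> v \<in> nbhd_i V E 2 {x} \<longleftrightarrow> v \<noteq> x \<and> \<not> E x v \<and> common_nbrs x v \<noteq> {}"
  by (auto simp: nbhd_i_2_singleton[OF graph] common_nbrs_def)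

lemma common_nbr_unique:
  assumes "x \<in> V" and "a \<in> nbhd_i V E 2 {x}" "p \<in> nbhd_i V E 2 {x}" "b \<in> nbhd_i V E 2 {x}"
    and "a \<noteq> b" "E a p" "E p b"
    and "u \<in> common_nbrs x a" "w \<in> common_nbrs x b"
  shows "u = w"
proof (rule ccontr)
  assume "u \<noteq> w"
  with assms have "distinct [x, u, a, p, b, w]"
    using graph_irrefl[OF graph] by (auto simp: mem_nbhd_2_iff common_nbrs_def)
  moreover have "E x u" "E u a" "E x w" "E w b"
    using assms(8,9) by (simp_all add: common_nbrs_def)
  ultimately have "has_cycle_of_length V E 6"
    using has_cycle_of_length_6I[OF graph _ _ _ assms(6,7) graph_sym[OF graph] graph_sym[OF graph]]
    by blast
  then show False
    using no_C6 by contradiction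
qed

lemma common_nbrs_singleton:
  assumes "x \<in> V" and "a \<in> nbhd_i V E 2 {x}" "p \<in> nbhd_i V E 2 {x}" "b \<in> nbhd_i V E 2 {x}"
    and "a \<noteq> b" "E a p" "E p b"
  shows "\<exists>u. common_nbrs x a = {u} \<and> common_nbrs x b = {u}"
proof -
  obtain u w where "u \<in> common_nbrs x a" "w \<in> common_nbrs x b"
    using assms(1-4) by (auto simp: mem_nbhd_2_iff)
  then show ?thesis
    using common_nbr_unique[OF assms] by blast
qed

lemma odd_cycle_common_nbr:
  assumes "x \<in> V" and cyc: "is_cycle A (induced E (nbhd_i V E 2 {x})) c"
    and "odd (length c)"
  shows "\<exists>u. \<forall>v\<in>set c. common_nbrs x v = {u}"
proof -
  let ?N2 = "nbhd_i V E 2 {x}"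
  define k where "k = length c"
  define cc where "cc i = c ! (i mod k)" for i
  have k: "k \<ge> 3" "odd k" "distinct c"
    and edge: "\<And>i. i < k \<Longrightarrow> induced E ?N2 (c ! i) (c ! (Suc i mod k))"
    using cyc assms(3) by (auto simp: is_cycle_def k_def)
  have cc_edge: "induced E ?N2 (cc i) (cc (Suc i))" for i
    using edge[of "i mod k"] k by (simp add: cc_def mod_Suc_eq)
  have kpos: "0 < k"
    using k(1) by linarith
  have cc_distinct: "cc i \<noteq> cc (Suc (Suc i))" for i
  proof
    assume "cc i = cc (Suc (Suc i))"
    then have "c ! (i mod k) = c ! (Suc (Suc i) mod k)"
      by (simp add: cc_def)
    moreover have "i mod k < length c" "Suc (Suc i) mod k < length c"
      using kpos unfolding k_def by (rule mod_less_divisor)+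
    ultimately have "i mod k = Suc (Suc i) mod k"
      using nth_eq_iff_index_eq[OF k(3)] by simp
    then have "k dvd 2"
      using mod_eq_dvd_iff_nat[of i "Suc (Suc i)" k] by simp
    then have "k \<le> 2"
      by (rule dvd_imp_le) simp
    with k(1) show False
      by linarith
  qed
  have step: "\<exists>u. common_nbrs x (cc i) = {u} \<and> common_nbrs x (cc (Suc (Suc i))) = {u}" for i
  proof -
    have "cc i \<in> ?N2" "cc (Suc i) \<in> ?N2" "cc (Suc (Suc i)) \<in> ?N2"
      and "E (cc i) (cc (Suc i))" "E (cc (Suc i)) (cc (Suc (Suc i)))"
      using cc_edge[of i] cc_edge[of "Suc i"] by (simp_all add: induced_def)
    then show ?thesis
      by (rule common_nbrs_singleton[OF assms(1) _ _ _ cc_distinct])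
  qed
  have step2: "common_nbrs x (cc (Suc (Suc i))) = common_nbrs x (cc i)" for i
    using step[of i] by auto
  have period: "cc (i + k) = cc i" for i
    by (simp add: cc_def)
  have const: "common_nbrs x (cc i) = common_nbrs x (cc 0)" for i
    using k(2) by (rule odd_periodic_two_step_const[where g = "\<lambda>i. common_nbrs x (cc i)"])
      (simp_all only: step2 period)
  obtain u where u: "common_nbrs x (cc 0) = {u}"
    using step[of 0] by blast
  have "common_nbrs x v = {u}" if v: "v \<in> set c" for v
  proof -
    obtain j where "j < k" "v = c ! j"
      using v by (auto simp: k_def in_set_conv_nth)
    then have "v = cc j"
      by (simp add: cc_def)
    then show ?thesis
      using const[of j] u by simp
  qed
  then show ?thesis
    by blast
qed

lemma component_common_nbr:
  assumes "x \<in> V" and comp: "is_component (nbhd_i V E 2 {x}) (induced E (nbhd_i V E 2 {x})) A"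
    and "a \<in> A" "b \<in> A" "E a b" and "common_nbrs x a = {u}" "common_nbrs x b = {u}"
  shows "\<forall>v\<in>A. common_nbrs x v = {u}"
proof -
  let ?N2 = "nbhd_i V E 2 {x}"
  \<comment> \<open>The neighbour \<open>y\<close> provides, for every other neighbour \<open>t\<close> of \<open>z\<close>, the path \<open>y z t\<close>
    with distinct ends needed to transport the common neighbour.\<close>
  define S where "S = {z \<in> ?N2. common_nbrs x z = {u} \<and> (\<exists>y\<in>?N2. E z y \<and> common_nbrs x y = {u})}"
  have closed: "t \<in> S" if zS: "z \<in> S" and zt: "induced E ?N2 z t" for z t
  proof -
    obtain y where y: "y \<in> ?N2" "E z y" "common_nbrs x y = {u}"
      and z: "z \<in> ?N2" "common_nbrs x z = {u}"
      using zS unfolding S_def by blast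
    have t: "t \<in> ?N2" "E z t"
      using zt by (simp_all add: induced_def)
    have "common_nbrs x t = {u}"
    proof (cases "t = y")
      case False
      then obtain u' where "common_nbrs x y = {u'}" "common_nbrs x t = {u'}"
        using common_nbrs_singleton[OF assms(1) y(1) z(1) t(1) _ graph_sym[OF graph y(2)] t(2)]
        by blast
      with y(3) show ?thesis
        by simp
    qed (use y in simp)
    then show ?thesis
      using t z graph_sym[OF graph t(2)] unfolding S_def by blast
  qed
  have S_closed: "z \<in> S \<longleftrightarrow> t \<in> S" if "induced E ?N2 z t" for z t
    using closed[OF _ that] closed[OF _ induced_sym[OF graph that]] by blast
  have "a \<in> S"
    using assms(3-) component_subset[OF comp] unfolding S_def by blast
  then have "A \<subseteq> S"
    using component_subset_if_closed[OF comp S_closed \<open>a \<in> A\<close>] by blast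
  then show ?thesis
    unfolding S_def by blast
qed

lemma nbhd_1_inter_nbhd_1_eq:
  assumes "x \<in> V" and "A \<subseteq> nbhd_i V E 2 {x}" and "a \<in> A"
    and common: "\<And>v. v \<in> A \<Longrightarrow> common_nbrs x v = {u}"
  shows "nbhd_i V E 1 {x} \<inter> nbhd_i V E 1 A = {u}"
proof (intro equalityI subsetI)
  fix v
  assume "v \<in> nbhd_i V E 1 {x} \<inter> nbhd_i V E 1 A"
  then obtain b where "E x v" "b \<in> A" "E b v"
    unfolding nbhd_i_1[OF graph] by blast
  then have "v \<in> common_nbrs x b"
    using graph_sym[OF graph \<open>E b v\<close>] by (simp add: common_nbrs_def)
  then show "v \<in> {u}"
    using common[OF \<open>b \<in> A\<close>] by simp
next
  fix v
  assume "v \<in> {u}"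
  moreover have "E x u" "E u a"
    using common[OF assms(3)] by (auto simp: common_nbrs_def)
  moreover have "u \<notin> A"
    using \<open>E x u\<close> assms(2) mem_nbhd_2_iff[OF assms(1)] by blast
  moreover have "u \<noteq> x"
    using \<open>E x u\<close> graph_irrefl[OF graph] by blast
  ultimately show "v \<in> nbhd_i V E 1 {x} \<inter> nbhd_i V E 1 A"
    using assms(3) graph_sym[OF graph \<open>E u a\<close>] unfolding nbhd_i_1[OF graph] by blast
qed

end

theorem lemma2p3:
  fixes V :: "'a set" and E :: "'a \<Rightarrow> 'a \<Rightarrow> bool" and x :: 'a and A :: "'a set"
  assumes "graph V E"
    and "\<not> has_cycle_of_length V E 6"
    and "x \<in> V"
    and "is_component (nbhd_i V E 2 {x}) (induced E (nbhd_i V E 2 {x})) A"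
    and "\<exists>k. odd k \<and> has_cycle_of_length A (induced E (nbhd_i V E 2 {x})) k"
  shows "card (nbhd_i V E 1 {x} \<inter> nbhd_i V E 1 A) = 1"
proof -
  interpret c6_free_graph V E
    using assms(1,2) by unfold_locales
  obtain c where cyc: "is_cycle A (induced E (nbhd_i V E 2 {x})) c" "odd (length c)"
    using assms(5) unfolding has_cycle_of_length_def by blast
  obtain u where u: "\<forall>v\<in>set c. common_nbrs x v = {u}"
    using odd_cycle_common_nbr[OF assms(3) cyc] by blast
  have c3: "length c \<ge> 3" and "set c \<subseteq> A"
    and edges: "\<forall>i < length c. induced E (nbhd_i V E 2 {x}) (c ! i) (c ! (Suc i mod length c))"
    using cyc(1) unfolding is_cycle_def by auto
  from c3 have "0 < length c" "1 < length c"
    by linarith+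
  then have "c ! 0 \<in> set c" "c ! 1 \<in> set c" "E (c ! 0) (c ! 1)"
    using edges[rule_format, of 0] by (simp_all add: induced_def nth_mem)
  with u \<open>set c \<subseteq> A\<close> have "\<forall>v\<in>A. common_nbrs x v = {u}"
    by (intro component_common_nbr[OF assms(3,4), of "c ! 0" "c ! 1"]) auto
  then have "nbhd_i V E 1 {x} \<inter> nbhd_i V E 1 A = {u}"
    using nbhd_1_inter_nbhd_1_eq[OF assms(3) component_subset[OF assms(4)]]
      \<open>c ! 0 \<in> set c\<close> \<open>set c \<subseteq> A\<close> by blast
  then show ?thesis
    by simp
qed

end
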